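(* Let $G$, $k\ge 3$, the choice strings $c_{i,j}$, the template string $t$, $L$ and $d$ be as in the binary construction in the context, and let $s\in\{0,1\}^L$ be a solution, i.e. $t$ and every choice string $c_{i,j}$ ($1\le i<j\le k$) have a substring of length $L$ at Hamming distance at most $d$ from $s$. Then every section of the encoding part of $s$ contains exactly one symbol $1$.
   Context: Let $G=(V,E)$ be an undirected simple graph with $V=\{v_1,\dots,v_n\}$ and edge set $E=\{e_1,\dots,e_m\}$, and let $k\ge 3$ be an integer; put $N=\binom{k}{2}$ and $b=nk-2k+2$. All strings are over $\{0,1\}$. For $1\le p\le n$ let $\mathrm{number}(p)=0^{p-1}10^{n-p}$. Let $\mathrm{front\_tag}=(1^{3nk}0)^{nk}$ (length $(3nk+1)nk$). Order the pairs $(i,j)$, $1\le i<j\le k$, lexicographically and let $i'$ be the position of $(i,j)$ in this order. For an edge $e$ joining $v_r,v_s$ with $r<s$ let $\mathrm{encode}(i,j,e)=(0^n)^{i-1}\,\mathrm{number}(r)\,(0^n)^{j-i-1}\,\mathrm{number}(s)\,(0^n)^{k-j}$, $\mathrm{back\_tag}(i')=0^{(i'-1)b}1^{b}0^{(N-i')b}$, and $\mathrm{block}(i,j,e)=\mathrm{front\_tag}\,\mathrm{encode}(i,j,e)\,\mathrm{back\_tag}(i')$. The choice string is $c_{i,j}=\mathrm{block}(i,j,e_1)\cdots\mathrm{block}(i,j,e_m)$. The template string is $t=\mathrm{front\_tag}\,1^{nk}\,0^{Nb}$. Set $L=(3nk+1)nk+nk+Nb$ and $d=nk-k$. For a string $s$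 of length $L$, its encoding part is the substring of its positions $(3nk+1)nk+1,\dots,(3nk+1)nk+nk$, divided into $k$ consecutive sections of length $n$. *)

theory Defs
  imports Main
begin

text \<open>Binary strings are modelled as bool lists; True stands for symbol 1, False for 0.
  The graph G has vertices v_1..v_n (indices 1..n) and its edge list e_1..e_m is given
  as a list of pairs (r,s) with 1 <= r < s <= n (no repetitions).\<close>

definition simple_graph_edges :: "nat \<Rightarrow> (nat \<times> nat) list \<Rightarrow> bool" where
  "simple_graph_edges n E \<longleftrightarrow> distinct E \<and> (\<forall>(r, s) \<in> set E. 1 \<le> r \<and> r < s \<and> s \<le> n)"

definition zeros :: "nat \<Rightarrow> bool list" where
  "zeros l = replicate l False"

definition ones :: "nat \<Rightarrow> bool list" where
  "ones l = replicate l True"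

definition number :: "nat \<Rightarrow> nat \<Rightarrow> bool list" where
  "number n p = zeros (p - 1) @ [True] @ zeros (n - p)"

definition front_tag :: "nat \<Rightarrow> nat \<Rightarrow> bool list" where
  "front_tag n k = concat (replicate (n * k) (ones (3 * n * k) @ [False]))"

definition Npairs :: "nat \<Rightarrow> nat" where
  "Npairs k = k choose 2"

definition bparam :: "nat \<Rightarrow> nat \<Rightarrow> nat" where
  "bparam n k = n * k - 2 * k + 2"

text \<open>Position of (i,j), 1 <= i < j <= k, in the lexicographic order of such pairs (1-based).\<close>
definition pair_pos :: "nat \<Rightarrow> nat \<Rightarrow> nat \<Rightarrow> nat" where
  "pair_pos k i j = length (takeWhile (\<lambda>p. p \<noteq> (i, j))
      [(a, c). a \<leftarrow> [1..<k+1], c \<leftarrow> [a+1..<k+1]]) + 1"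

definition encode :: "nat \<Rightarrow> nat \<Rightarrow> nat \<Rightarrow> nat \<Rightarrow> nat \<times> nat \<Rightarrow> bool list" where
  "encode n k i j e = (case e of (r, s) \<Rightarrow>
      concat (replicate (i - 1) (zeros n)) @ number n r @
      concat (replicate (j - i - 1) (zeros n)) @ number n s @
      concat (replicate (k - j) (zeros n)))"

definition back_tag :: "nat \<Rightarrow> nat \<Rightarrow> nat \<Rightarrow> bool list" where
  "back_tag n k i' = zeros ((i' - 1) * bparam n k) @ ones (bparam n k) @
      zeros ((Npairs k - i') * bparam n k)"

definition block :: "nat \<Rightarrow> nat \<Rightarrow> nat \<Rightarrow> nat \<Rightarrow> nat \<times> nat \<Rightarrow> bool list" where
  "block n k i j e = front_tag n k @ encode n k i j e @ back_tag n k (pair_pos k i j)"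

definition choice_string :: "nat \<Rightarrow> (nat \<times> nat) list \<Rightarrow> nat \<Rightarrow> nat \<Rightarrow> nat \<Rightarrow> bool list" where
  "choice_string n E k i j = concat (map (block n k i j) E)"

definition template :: "nat \<Rightarrow> nat \<Rightarrow> bool list" where
  "template n k = front_tag n k @ ones (n * k) @ zeros (Npairs k * bparam n k)"

definition Lparam :: "nat \<Rightarrow> nat \<Rightarrow> nat" where
  "Lparam n k = (3 * n * k + 1) * n * k + n * k + Npairs k * bparam n k"

definition dparam :: "nat \<Rightarrow> nat \<Rightarrow> nat" where
  "dparam n k = n * k - k"

definition hamming :: "bool list \<Rightarrow> bool list \<Rightarrow> nat" where
  "hamming x y = length (filter (\<lambda>(a, b). a \<noteq> b) (zip x y))"

definition close_substring :: "bool list \<Rightarrow> bool list \<Rightarrow> nat \<Rightarrow> bool" where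
  "close_substring c s d \<longleftrightarrow>
     (\<exists>p. p + length s \<le> length c \<and> hamming (take (length s) (drop p c)) s \<le> d)"

definition enc_section :: "nat \<Rightarrow> nat \<Rightarrow> bool list \<Rightarrow> nat \<Rightarrow> bool list" where
  "enc_section n k s q = take n (drop ((3 * n * k + 1) * n * k + (q - 1) * n) s)"

end

theory Submission
  imports Defs "HOL-Number_Theory.Cong"
begin

(* A solution s is within d = nk - k of the template, so its first (3nk+1)nk symbols nearly
   reproduce the tag (1^{3nk} 0)^{nk}.  A window of length L in a choice string that does not start
   at a block boundary either shifts this tag by less than one period against the tag of some block,
   or lays it over the sparse encode/back-tag part of a block; both cost more than 2d mismatches,
   which the triangle inequality through s forbids.  So every c_{ij} contains a whole block within
   distance d of s.

   Let X and Y be the positions of the 1s of s in its encoding part and in its back part.  The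
   template gives |X| >= k + |Y|.  A block for the pair (i,j) has two 1s e1, e2 in its encode part
   and a run B of nk - 2k + 2 ones in its back tag; being within d of s, it gives
   |{e1,e2} - X| + |X - {e1,e2}| + |B - Y| + |Y - B| <= d.  The two bounds leave no slack: e1 and e2
   lie in X, Y lies in B, and |X| <= k + |Y|.  The runs B for (1,2) and (1,3) are disjoint, so Y is
   empty and |X| <= k, while the pairs (q,k) and (1,k) put an element of X into every section q. *)

section \<open>Bit strings and Hamming distance\<close>

definition support :: "bool list \<Rightarrow> nat set" where
  "support xs = {i. i < length xs \<and> xs ! i}"

lemma support_subset: "support xs \<subseteq> {..<length xs}"
  by (auto simp: support_def)

lemma finite_support [simp]: "finite (support xs)"
  using finite_subset[OF support_subset] by blast

lemma card_support: "card (support xs) = length (filter (\<lambda>x. x) xs)"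
  by (simp add: support_def length_filter_conv_card)

lemma support_replicate [simp]: "support (replicate m b) = (if b then {..<m} else {})"
  by (auto simp: support_def)

lemma support_append:
  "support (xs @ ys) = support xs \<union> (+) (length xs) ` support ys" (is "?L = ?R")
proof (rule set_eqI)
  fix i
  show "i \<in> ?L \<longleftrightarrow> i \<in> ?R"
    by (cases "i < length xs")
      (auto simp: support_def nth_append image_iff intro!: exI[where x = "i - length xs"])
qed

lemma support_Cons:
  "support (b # xs) = (if b then insert 0 (Suc ` support xs) else Suc ` support xs)"
  (is "?L = ?R")
proof (rule set_eqI)
  fix i
  show "i \<in> ?L \<longleftrightarrow> i \<in> ?R"
    by (cases i) (auto simp: support_def)
qed

lemma card_support_append: "card (support (xs @ ys)) = card (support xs) + card (support ys)"
  by (simp add: card_support)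

lemma card_support_take_drop:
  "card (support (take n (drop m xs))) = card (support xs \<inter> {m..<m + n})"
proof -
  have "support xs \<inter> {m..<m + n} = (+) m ` support (take n (drop m xs))" (is "?L = ?R")
  proof (rule set_eqI)
    fix i
    show "i \<in> ?L \<longleftrightarrow> i \<in> ?R"
      by (cases "m \<le> i") (auto simp: support_def image_iff intro!: exI[where x = "i - m"])
  qed
  then show ?thesis
    by (simp add: card_image)
qed

lemma hamming_conv_card:
  "hamming xs ys = card {i. i < min (length xs) (length ys) \<and> xs ! i \<noteq> ys ! i}"
  unfolding hamming_def length_filter_conv_card by (auto intro: arg_cong[where f = card])

lemma hamming_commute: "hamming xs ys = hamming ys xs"
  unfolding hamming_conv_card by (metis min.commute)

lemma hamming_append1:
  "hamming (xs @ ys) zs = hamming xs (take (length xs) zs) + hamming ys (drop (length xs) zs)"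
  by (simp add: hamming_def zip_append1)

lemma hamming_triangle:
  assumes "length xs = length ys" "length ys = length zs"
  shows "hamming xs zs \<le> hamming xs ys + hamming ys zs"
proof -
  have "{i. i < length xs \<and> xs ! i \<noteq> zs ! i} \<subseteq>
      {i. i < length xs \<and> xs ! i \<noteq> ys ! i} \<union> {i. i < length xs \<and> ys ! i \<noteq> zs ! i}"
    by auto
  then have "card {i. i < length xs \<and> xs ! i \<noteq> zs ! i} \<le>
      card ({i. i < length xs \<and> xs ! i \<noteq> ys ! i} \<union> {i. i < length xs \<and> ys ! i \<noteq> zs ! i})"
    by (intro card_mono) auto
  also have "\<dots> \<le> card {i. i < length xs \<and> xs ! i \<noteq> ys ! i} + card {i. i < length xs \<and> ys ! i \<noteq> zs ! i}"
    by (rule card_Un_le)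
  finally show ?thesis
    using assms by (simp add: hamming_conv_card)
qed

lemma hamming_support:
  assumes "length xs = length ys"
  shows "hamming xs ys + 2 * card (support xs \<inter> support ys)
    = card (support xs) + card (support ys)"
proof -
  let ?A = "support xs" and ?B = "support ys"
  have "hamming xs ys = card ((?A - ?B) \<union> (?B - ?A))"
    unfolding hamming_conv_card using assms
    by (auto simp: support_def intro!: arg_cong[where f = card])
  also have "\<dots> = card (?A - ?B) + card (?B - ?A)"
    by (rule card_Un_disjoint) auto
  also have "\<dots> = (card ?A - card (?A \<inter> ?B)) + (card ?B - card (?A \<inter> ?B))"
    by (simp add: card_Diff_subset_Int Int_commute)
  finally show ?thesis
    using card_mono[of ?A "?A \<inter> ?B"] card_mono[of ?B "?A \<inter> ?B"] by simp
qed

(* With X, Y, U, V the supports of x, y, u, v, the template bound says |X| >= k + |Y|.  Inserted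
   into the block bound, rewritten by hamming_support, it yields |U \<inter> X| >= |U| and
   |Y \<inter> V| >= |Y|. *)
lemma close_to_template_and_block:
  fixes x y u v :: "bool list" and K k :: nat
  assumes len: "length x = K" "length u = K" "length y = length v"
    and sizes: "card (support u) = 2" "card (support v) + 2 * k = K + 2" "k \<le> K"
    and template: "hamming (replicate K True) x + hamming (replicate (length v) False) y \<le> K - k"
    and block: "hamming u x + hamming v y \<le> K - k"
  shows "support u \<subseteq> support x" "support y \<subseteq> support v"
    and "card (support x) \<le> k + card (support y)"
proof -
  let ?X = "support x" and ?Y = "support y" and ?U = "support u" and ?V = "support v"
  have "hamming (replicate K True) x + 2 * card ?X = K + card ?X"
    using hamming_support[of "replicate K True" x] len support_subset[of x]
    by (simp add: Int_absorb1)
  moreover have "hamming (replicate (length v) False) y = card ?Y"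
    using hamming_support[of "replicate (length v) False" y] len by simp
  moreover have "hamming u x + 2 * card (?U \<inter> ?X) = 2 + card ?X"
    using hamming_support[of u x] len sizes by simp
  moreover have "hamming v y + 2 * card (?Y \<inter> ?V) = card ?V + card ?Y"
    using hamming_support[of v y] len by (simp add: Int_commute)
  moreover have "card (?U \<inter> ?X) \<le> 2" "card (?Y \<inter> ?V) \<le> card ?Y"
    using sizes card_mono[of ?U "?U \<inter> ?X"] card_mono[of ?Y "?Y \<inter> ?V"] by auto
  ultimately have "card ?U \<le> card (?U \<inter> ?X)" "card ?Y \<le> card (?Y \<inter> ?V)"
    and "card ?X \<le> k + card ?Y"
    using template block sizes by linarith+
  then show "?U \<subseteq> ?X" "?Y \<subseteq> ?V" "card ?X \<le> k + card ?Y"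
    using card_seteq[of ?U "?U \<inter> ?X"] card_seteq[of ?Y "?Y \<inter> ?V"] by auto
qed

lemma card_Int_eq_1_if_meets_disjoint:
  fixes S :: "'i \<Rightarrow> 'a set"
  assumes "finite I" "finite X" "card X \<le> card I"
    and "\<forall>i\<in>I. \<forall>j\<in>I. i \<noteq> j \<longrightarrow> S i \<inter> S j = {}"
    and meets: "\<forall>i\<in>I. X \<inter> S i \<noteq> {}"
  shows "\<forall>i\<in>I. card (X \<inter> S i) = 1"
proof
  fix i assume "i \<in> I"
  have "(\<Sum>i\<in>I. card (X \<inter> S i)) = card (\<Union>i\<in>I. X \<inter> S i)"
    using assms by (subst card_UN_disjoint) auto
  also have "\<dots> \<le> card X"
    using \<open>finite X\<close> by (intro card_mono) auto
  finally have "(\<Sum>i\<in>I. card (X \<inter> S i)) \<le> (\<Sum>i\<in>I. 1)"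
    using \<open>card X \<le> card I\<close> by simp
  moreover have pos: "1 \<le> card (X \<inter> S i)" if "i \<in> I" for i
    using meets that \<open>finite X\<close> by (simp add: Suc_le_eq card_gt_0_iff)
  ultimately have "(\<Sum>i\<in>I. 1) = (\<Sum>i\<in>I. card (X \<inter> S i))"
    using sum_mono[of I "\<lambda>_. 1" "\<lambda>i. card (X \<inter> S i)"] pos by (simp add: le_antisym)
  then show "card (X \<inter> S i) = 1"
    using sum_mono_inv[of "\<lambda>_. 1" I "\<lambda>i. card (X \<inter> S i)" i] pos \<open>i \<in> I\<close> \<open>finite I\<close> by simp
qed

section \<open>Mismatches against a periodic tag\<close>

lemma div_le_card_residue_class: "m div P \<le> card {x. x < m \<and> P dvd (x + c)}"
proof (cases "P = 0")
  case False
  define r where "r = (P - c mod P) mod P"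
  have "r < P"
    using False by (simp add: r_def)
  have "P dvd (r + c)"
    using False unfolding r_def
    by (metis add.commute le_add_diff_inverse2 mod_add_right_eq mod_eq_0_iff_dvd mod_le_divisor
        mod_self not_gr_zero)
  have "(\<lambda>j. j * P + r) ` {..<m div P} \<subseteq> {x. x < m \<and> P dvd (x + c)}"
  proof clarify
    fix j assume "j < m div P"
    then have "j * P + P \<le> m"
      by (metis Suc_leI div_times_less_eq_dividend le_trans mult_Suc mult_le_mono1 add.commute)
    then show "j * P + r < m \<and> P dvd (j * P + r + c)"
      using \<open>r < P\<close> \<open>P dvd (r + c)\<close> by (simp add: add.assoc)
  qed
  then have "card ((\<lambda>j. j * P + r) ` {..<m div P}) \<le> card {x. x < m \<and> P dvd (x + c)}"
    by (intro card_mono) auto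
  moreover have "inj_on (\<lambda>j. j * P + r) {..<m div P}"
    using False by (intro inj_onI) simp
  ultimately show ?thesis
    by (simp add: card_image)
qed simp

lemma card_residue_class_short_interval:
  fixes P w m c :: nat
  assumes "m \<le> P"
  shows "card {x. w \<le> x \<and> x < w + m \<and> P dvd (x + c)} \<le> 1"
proof -
  let ?S = "{x. w \<le> x \<and> x < w + m \<and> P dvd (x + c)}"
  have eq: "x = y" if "x \<in> ?S" and "y \<in> ?S" and "x \<le> y" for x y
  proof -
    have "P dvd (y + c) - (x + c)"
      using that by (intro dvd_diff_nat) auto
    then have "P dvd y - x"
      by simp
    moreover have "y - x < P"
      using that assms by auto
    ultimately show "x = y"
      using \<open>x \<le> y\<close> nat_dvd_not_less[of "y - x" P] by linarith
  qed
  have "finite ?S"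
    by (rule finite_subset[of _ "{..<w + m}"]) auto
  moreover have "\<forall>x\<in>?S. \<forall>y\<in>?S. x = y"
  proof (intro ballI)
    fix x y assume "x \<in> ?S" "y \<in> ?S"
    then show "x = y"
      using eq[of x y] eq[of y x] by linarith
  qed
  ultimately show ?thesis
    using card_le_Suc0_iff_eq[of ?S] by simp
qed

lemma card_residue_class_mismatches:
  fixes P m a b :: nat
  assumes "\<not> [a = b] (mod P)"
  shows "2 * (m div P) \<le> card {x. x < m \<and> (P dvd (x + a)) \<noteq> (P dvd (x + b))}"
proof -
  let ?Z = "\<lambda>c. {x. x < m \<and> P dvd (x + c)}"
  have "[a = b] (mod P)" if "P dvd (x + a)" "P dvd (x + b)" for x
  proof -
    have "[x + a = x + b] (mod P)"
      using that by (simp add: cong_def)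
    then show ?thesis
      by (simp add: cong_add_lcancel_nat)
  qed
  then have "?Z a \<inter> ?Z b = {}"
    using assms by blast
  then have "card (?Z a) + card (?Z b) = card (?Z a \<union> ?Z b)"
    by (simp add: card_Un_disjoint)
  also have "\<dots> \<le> card {x. x < m \<and> (P dvd (x + a)) \<noteq> (P dvd (x + b))}"
    using \<open>?Z a \<inter> ?Z b = {}\<close> by (intro card_mono) auto
  finally show ?thesis
    using div_le_card_residue_class[of m P a] div_le_card_residue_class[of m P b] by linarith
qed

lemma tag_shift_mismatches:
  fixes P K d :: nat
  assumes "0 < d" "d < P"
  shows "2 * (K - 1) \<le> card {x. x < K * P - d \<and> (P dvd Suc x) \<noteq> (P dvd Suc (x + d))}"
proof -
  have "(K * P - d) div P = K - 1"
  proof (cases K)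
    case (Suc K')
    then show ?thesis
      using assms by (intro div_nat_eqI) (auto simp: algebra_simps)
  qed simp
  moreover have "\<not> [1 = 1 + d] (mod P)"
    using assms by (auto simp: cong_def mod_Suc)
  ultimately show ?thesis
    using card_residue_class_mismatches[of 1 "1 + d" P "K * P - d"] by simp
qed

lemma sparse_window_mismatches:
  fixes D :: "nat \<Rightarrow> bool" and P F w m h :: nat
  assumes "m \<le> P" "w + m \<le> F" "card {x. w \<le> x \<and> x < w + m \<and> D x} \<le> h"
  shows "m - Suc h \<le> card {x. x < F \<and> D x \<noteq> (\<not> P dvd Suc x)}"
proof -
  let ?Mis = "{x. x < F \<and> D x \<noteq> (\<not> P dvd Suc x)}"
  let ?D = "{x. w \<le> x \<and> x < w + m \<and> D x}"
  let ?Z = "{x. w \<le> x \<and> x < w + m \<and> P dvd (x + 1)}"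
  have "m = card {w..<w + m}"
    by simp
  also have "\<dots> \<le> card (?Mis \<union> ?D \<union> ?Z)"
    using assms(2) by (intro card_mono) auto
  also have "\<dots> \<le> card (?Mis \<union> ?D) + card ?Z"
    by (rule card_Un_le)
  also have "\<dots> \<le> card ?Mis + card ?D + card ?Z"
    using card_Un_le[of ?Mis ?D] by simp
  finally show ?thesis
    using assms(3) card_residue_class_short_interval[OF assms(1), of w 1] by linarith
qed

lemma tail_overlay_mismatches:
  fixes C :: "nat \<Rightarrow> bool" and K P L h r :: nat
  assumes "0 < K" "K * P \<le> L"
    and rest: "card {y. K * P \<le> y \<and> y < L \<and> C y} \<le> h"
    and r: "P \<le> r" "r + P \<le> L"
  shows "min P (L - K * P) - Suc h \<le> card {x. x < K * P \<and> C (r + x) \<noteq> (\<not> P dvd Suc x)}"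
proof -
  let ?F = "K * P"
  define w where "w = ?F - min r ?F"
  define m where "m = min P (L - ?F)"
  have "(+) r ` {x. w \<le> x \<and> x < w + m \<and> C (r + x)} \<subseteq> {y. ?F \<le> y \<and> y < L \<and> C y}"
    using r by (auto simp: w_def m_def)
  then have "card ((+) r ` {x. w \<le> x \<and> x < w + m \<and> C (r + x)}) \<le> card {y. ?F \<le> y \<and> y < L \<and> C y}"
    by (intro card_mono) auto
  then have "card {x. w \<le> x \<and> x < w + m \<and> C (r + x)} \<le> h"
    using rest by (simp add: card_image)
  moreover have "P \<le> ?F"
    using \<open>0 < K\<close> by simp
  then have "w + m \<le> ?F"
    using r by (auto simp: w_def m_def min_def)
  ultimately show ?thesis
    unfolding m_def by (intro sparse_window_mismatches[where D = "\<lambda>x. C (r + x)"]) auto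
qed

(* C is a string read from the start of a block: the block's tag occupies [0, KP) and the tag of
   the next block starts at L.  A window starting at 0 < r < L either shifts a tag by less than a
   period (r < P, or L - r < P) or lays the tag over the sparse tail of the block. *)
lemma misaligned_tag_mismatches:
  fixes C :: "nat \<Rightarrow> bool" and K P L h r :: nat
  assumes "0 < K" "K * P \<le> L"
    and tag0: "\<forall>y < K * P. C y = (\<not> P dvd Suc y)"
    and tagL: "\<forall>y < K * P. C (L + y) = (\<not> P dvd Suc y)"
    and rest: "card {y. K * P \<le> y \<and> y < L \<and> C y} \<le> h"
    and r: "0 < r" "r < L"
  shows "min (2 * (K - 1)) (min P (L - K * P) - Suc h)
    \<le> card {x. x < K * P \<and> C (r + x) \<noteq> (\<not> P dvd Suc x)}"
proof -
  let ?F = "K * P"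
  let ?Mis = "{x. x < ?F \<and> C (r + x) \<noteq> (\<not> P dvd Suc x)}"
  let ?Shift = "\<lambda>d. {x. x < ?F - d \<and> (P dvd Suc x) \<noteq> (P dvd Suc (x + d))}"
  consider "r < P" | "L < r + P" | "P \<le> r" "r + P \<le> L"
    by linarith
  then show ?thesis
  proof cases
    case 1
    have "?Shift r \<subseteq> ?Mis"
      using tag0 by (auto simp: add.commute)
    then have "card (?Shift r) \<le> card ?Mis"
      by (intro card_mono) auto
    then show ?thesis
      using tag_shift_mismatches[OF \<open>0 < r\<close> 1, of K] by linarith
  next
    case 2
    define d where "d = L - r"
    have d: "0 < d" "d < P" "r + d = L"
      using 2 r by (auto simp: d_def)
    have "(+) d ` ?Shift d \<subseteq> ?Mis"
      using tagL d by (auto simp: add.commute add.left_commute)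
    then have "card ((+) d ` ?Shift d) \<le> card ?Mis"
      by (intro card_mono) auto
    then show ?thesis
      using tag_shift_mismatches[OF d(1,2), of K] by (simp add: card_image)
  next
    case 3
    then have "min P (L - ?F) - Suc h \<le> card ?Mis"
      by (rule tail_overlay_mismatches[OF \<open>0 < K\<close> \<open>K * P \<le> L\<close> rest])
    then show ?thesis
      by linarith
  qed
qed

section \<open>Concatenations of equal-length blocks\<close>

lemma length_concat_uniform:
  "\<forall>x\<in>set xs. length (f x) = L \<Longrightarrow> length (concat (map f xs)) = length xs * L"
  by (induction xs) auto

lemma drop_concat_uniform:
  assumes "\<forall>x\<in>set xs. length (f x) = L"
  shows "drop (a * L) (concat (map f xs)) = concat (map f (drop a xs))"
  using assms
proof (induction xs arbitrary: a)
  case (Cons x xs)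
  then show ?case
    by (cases a) (simp_all add: add.commute)
qed simp

lemma take_drop_concat_uniform:
  assumes "\<forall>x\<in>set xs. length (f x) = L" "a < length xs"
  shows "take L (drop (a * L) (concat (map f xs))) = f (xs ! a)"
  using assms by (simp add: drop_concat_uniform Cons_nth_drop_Suc[symmetric])

lemma nth_concat_uniform:
  assumes "\<forall>x\<in>set xs. length (f x) = L" "a < length xs" "y < L"
  shows "concat (map f xs) ! (a * L + y) = f (xs ! a) ! y"
proof -
  have "a * L \<le> length xs * L"
    using assms(2) by (intro mult_le_mono1) simp
  then have "concat (map f xs) ! (a * L + y) = drop (a * L) (concat (map f xs)) ! y"
    using length_concat_uniform[OF assms(1)] by simp
  also have "\<dots> = take L (drop (a * L) (concat (map f xs))) ! y"
    using assms(3) by simp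
  finally show ?thesis
    using take_drop_concat_uniform[OF assms(1,2)] by simp
qed

lemma nth_concat_replicate:
  assumes "i < K * length u"
  shows "concat (replicate K u) ! i = u ! (i mod length u)"
proof -
  have "0 < length u"
    using assms by (cases "length u") auto
  then show ?thesis
    using assms nth_concat_uniform[of "replicate K ()" "\<lambda>_. u" "length u" "i div length u" "i mod length u"]
    by (simp add: map_replicate_const less_mult_imp_div_less mult.commute)
qed

lemma concat_replicate_replicate: "concat (replicate m (replicate n x)) = replicate (m * n) x"
  by (induction m) (simp_all add: replicate_add)

lemma misaligned_substring_mismatches:
  fixes f :: "'a \<Rightarrow> bool list" and es :: "'a list"
  assumes len: "\<forall>e\<in>set es. length (f e) = L"
    and tag: "\<forall>e\<in>set es. \<forall>y < K * P. f e ! y = (\<not> P dvd Suc y)"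
    and rest: "\<forall>e\<in>set es. card (support (drop (K * P) (f e))) \<le> h"
    and "0 < K" "K * P \<le> L"
    and p: "p + L \<le> length (concat (map f es))" "\<not> L dvd p"
  shows "min (2 * (K - 1)) (min P (L - K * P) - Suc h)
    \<le> card {x. x < K * P \<and> concat (map f es) ! (p + x) \<noteq> (\<not> P dvd Suc x)}"
proof -
  let ?c = "concat (map f es)"
  define a where "a = p div L"
  define r where "r = p mod L"
  define C where "C y = ?c ! (a * L + y)" for y
  have "0 < L"
    using p length_concat_uniform[OF len] by (cases L) auto
  then have r: "0 < r" "r < L"
    using p(2) by (auto simp: r_def dvd_eq_mod_eq_0)
  have "a * L + r + L \<le> length es * L"
    using p(1) length_concat_uniform[OF len] by (simp add: a_def r_def)
  then have "Suc a * L < length es * L"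
    using r by simp
  then have a: "Suc a < length es"
    by (meson mult_less_cancel2)
  have C0: "C y = f (es ! a) ! y" if "y < L" for y
    using nth_concat_uniform[OF len _ that, of a] a by (simp add: C_def)
  have CL: "C (L + y) = f (es ! Suc a) ! y" if "y < L" for y
    using nth_concat_uniform[OF len a that] by (simp add: C_def algebra_simps)
  have "{y. K * P \<le> y \<and> y < L \<and> C y} = support (f (es ! a)) \<inter> {K * P..<K * P + (L - K * P)}"
    using C0 a len \<open>K * P \<le> L\<close> by (auto simp: support_def)
  also have "card \<dots> = card (support (drop (K * P) (f (es ! a))))"
    using a len by (simp flip: card_support_take_drop)
  finally have "card {y. K * P \<le> y \<and> y < L \<and> C y} \<le> h"
    using rest a by simp
  moreover have "\<forall>y < K * P. C y = (\<not> P dvd Suc y)" "\<forall>y < K * P. C (L + y) = (\<not> P dvd Suc y)"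
    using C0 CL tag a \<open>K * P \<le> L\<close> by auto
  ultimately have "min (2 * (K - 1)) (min P (L - K * P) - Suc h)
      \<le> card {x. x < K * P \<and> C (r + x) \<noteq> (\<not> P dvd Suc x)}"
    using misaligned_tag_mismatches[OF \<open>0 < K\<close> \<open>K * P \<le> L\<close>] r by blast
  moreover have "C (r + x) = ?c ! (p + x)" for x
    by (simp add: C_def a_def r_def add.assoc[symmetric])
  ultimately show ?thesis
    by simp
qed

section \<open>The strings of the construction\<close>

lemma length_takeWhile_less: "x \<in> set xs \<Longrightarrow> \<not> P x \<Longrightarrow> length (takeWhile P xs) < length xs"
  by (induction xs) auto

lemma sum_diff_choose_two: "(\<Sum>a = 1..k. k - a) = k choose 2"
proof (induction k)
  case (Suc k)
  have "(\<Sum>a = 1..Suc k. Suc k - a) = (\<Sum>a = 1..k. (k - a) + 1)"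
    by (auto simp: Suc_diff_le intro: sum.cong)
  also have "\<dots> = (k choose 2) + k"
    using Suc by (simp only: sum.distrib) simp
  also have "\<dots> = Suc k choose 2"
    using binomial_Suc_Suc[of k 1] by (simp add: numeral_2_eq_2)
  finally show ?case .
qed simp

lemma length_pair_list: "length [(a, c). a \<leftarrow> [1..<k+1], c \<leftarrow> [a+1..<k+1]] = k choose 2"
proof -
  have "length [(a, c). a \<leftarrow> [1..<k+1], c \<leftarrow> [a+1..<k+1]] = (\<Sum>a\<leftarrow>[1..<k+1]. k - a)"
    by (simp add: length_concat comp_def del: upt_Suc)
  also have "\<dots> = (\<Sum>a = 1..k. k - a)"
    by (simp add: interv_sum_list_conv_sum_set_nat atLeastLessThanSuc_atLeastAtMost del: upt_Suc)
  finally show ?thesis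
    using sum_diff_choose_two[of k] by simp
qed

lemma pair_pos_bounds:
  assumes "1 \<le> i" "i < j" "j \<le> k"
  shows "1 \<le> pair_pos k i j" "pair_pos k i j \<le> Npairs k"
proof -
  let ?pairs = "[(a, c). a \<leftarrow> [1..<k+1], c \<leftarrow> [a+1..<k+1]]"
  have "(i, j) \<in> set ?pairs"
    using assms by (auto simp del: upt_Suc intro!: bexI[where x = i])
  then have "length (takeWhile (\<lambda>p. p \<noteq> (i, j)) ?pairs) < length ?pairs"
    by (rule length_takeWhile_less) simp
  then show "1 \<le> pair_pos k i j" "pair_pos k i j \<le> Npairs k"
    unfolding pair_pos_def Npairs_def length_pair_list by simp_all
qed

lemma pair_pos_1_2: "3 \<le> k \<Longrightarrow> pair_pos k 1 2 = 1"
  by (simp add: pair_pos_def upt_conv_Cons)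

lemma pair_pos_1_3: "3 \<le> k \<Longrightarrow> pair_pos k 1 3 = 2"
  by (simp add: pair_pos_def upt_conv_Cons del: upt_Suc)

lemma length_front_tag: "length (front_tag n k) = (3 * n * k + 1) * n * k"
  by (simp add: front_tag_def ones_def length_concat sum_list_replicate algebra_simps)

lemma front_tag_nth:
  assumes "y < (3 * n * k + 1) * n * k"
  shows "front_tag n k ! y = (\<not> (3 * n * k + 1) dvd Suc y)"
proof -
  have "front_tag n k ! y = (ones (3 * n * k) @ [False]) ! (y mod (3 * n * k + 1))"
    unfolding front_tag_def using assms by (subst nth_concat_replicate) (simp_all add: ones_def algebra_simps)
  also have "\<dots> = (y mod (3 * n * k + 1) \<noteq> 3 * n * k)"
    using mod_less_divisor[of "3 * n * k + 1" y] by (auto simp: ones_def nth_append simp del: mod_less_divisor)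
  finally show ?thesis
    by (auto simp: dvd_eq_mod_eq_0 mod_Suc)
qed

lemma number_props:
  assumes "1 \<le> p" "p \<le> n"
  shows "length (number n p) = n" "support (number n p) = {p - 1}"
  using assms by (auto simp: number_def zeros_def support_append support_Cons)

lemma encode_props:
  assumes "1 \<le> i" "i < j" "j \<le> k" "1 \<le> r" "r \<le> n" "1 \<le> t" "t \<le> n"
  shows "length (encode n k i j (r, t)) = n * k"
    and "support (encode n k i j (r, t)) = {(i - 1) * n + (r - 1), (j - 1) * n + (t - 1)}"
    and "card (support (encode n k i j (r, t))) = 2"
proof -
  define a c e where "a = i - 1" and "c = j - i - 1" and "e = k - j"
  have ace: "i = a + 1" "j = a + c + 2" "k = a + c + e + 2"
    using assms by (simp_all add: a_def c_def e_def)
  show "length (encode n k i j (r, t)) = n * k"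
    and supp: "support (encode n k i j (r, t)) = {(i - 1) * n + (r - 1), (j - 1) * n + (t - 1)}"
    using number_props[of r n] number_props[of t n] assms unfolding ace
    by (simp_all add: encode_def concat_replicate_replicate zeros_def support_append algebra_simps insert_commute)
  have "(i - 1) * n + (r - 1) < (j - 1) * n + (t - 1)"
    using assms unfolding ace by (simp add: algebra_simps)
  then show "card (support (encode n k i j (r, t))) = 2"
    unfolding supp by simp
qed

lemma back_tag_props:
  assumes "1 \<le> p" "p \<le> Npairs k"
  shows "length (back_tag n k p) = Npairs k * bparam n k"
    and "support (back_tag n k p) = {(p - 1) * bparam n k..<p * bparam n k}"
    and "card (support (back_tag n k p)) = bparam n k"
proof -
  obtain p' where "p = Suc p'"
    using assms by (cases p) auto
  moreover have "p * bparam n k + (Npairs k - p) * bparam n k = Npairs k * bparam n k"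
    using assms by (simp flip: add_mult_distrib)
  ultimately show "length (back_tag n k p) = Npairs k * bparam n k"
    and "support (back_tag n k p) = {(p - 1) * bparam n k..<p * bparam n k}"
    and "card (support (back_tag n k p)) = bparam n k"
    by (simp_all add: back_tag_def zeros_def ones_def support_append lessThan_atLeast0 algebra_simps)
qed

lemma block_props:
  assumes "1 \<le> i" "i < j" "j \<le> k" "1 \<le> r" "r \<le> n" "1 \<le> t" "t \<le> n"
  shows "length (block n k i j (r, t)) = Lparam n k"
    and "y < (3 * n * k + 1) * n * k \<Longrightarrow> block n k i j (r, t) ! y = (\<not> (3 * n * k + 1) dvd Suc y)"
    and "card (support (drop ((3 * n * k + 1) * n * k) (block n k i j (r, t)))) = bparam n k + 2"
  using encode_props[OF assms] back_tag_props[OF pair_pos_bounds[OF assms(1-3)], of n]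
    front_tag_nth[of y n k]
  by (simp_all add: block_def Lparam_def length_front_tag nth_append card_support_append)

lemma template_props:
  shows "length (template n k) = Lparam n k"
    and "y < (3 * n * k + 1) * n * k \<Longrightarrow> template n k ! y = (\<not> (3 * n * k + 1) dvd Suc y)"
  using front_tag_nth[of y n k]
  by (simp_all add: template_def Lparam_def length_front_tag ones_def zeros_def nth_append)

lemma Lparam_pos: "2 \<le> k \<Longrightarrow> 0 < Lparam n k"
  by (simp add: Lparam_def Npairs_def bparam_def)

lemma two_le_of_close_choice_string:
  assumes "simple_graph_edges n E" "close_substring (choice_string n E k i j) s d" "s \<noteq> []"
  shows "2 \<le> n"
proof -
  have "E \<noteq> []"
    using assms(2,3) by (auto simp: close_substring_def choice_string_def)
  then obtain r t where "(r, t) \<in> set E"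
    by (metis list.set_intros(1) neq_Nil_conv surj_pair)
  then show ?thesis
    using assms(1) by (auto simp: simple_graph_edges_def)
qed

lemma hamming_le_if_close_substring_same_length:
  assumes "close_substring c s d" "length c = length s"
  shows "hamming c s \<le> d"
  using assms by (auto simp: close_substring_def)

lemma misaligned_mismatches_exceed_twice_dparam:
  assumes "3 \<le> k" "2 \<le> n"
  shows "2 * dparam n k < min (2 * (n * k - 1))
    (min (3 * n * k + 1) (Lparam n k - n * k * (3 * n * k + 1)) - Suc (bparam n k + 2))"
proof -
  have "2 * k \<le> n * k"
    using assms by (intro mult_le_mono1)
  then have b: "bparam n k + 2 * k = n * k + 2" and d: "dparam n k + k = n * k"
    unfolding bparam_def dparam_def by linarith+
  have "3 * 2 \<le> k * (k - 1)"
    using assms by (intro mult_le_mono) auto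
  then have "3 \<le> Npairs k"
    by (simp add: Npairs_def choose_two)
  then have "3 * bparam n k \<le> Npairs k * bparam n k"
    by (intro mult_le_mono1)
  moreover have "Lparam n k - n * k * (3 * n * k + 1) = n * k + Npairs k * bparam n k"
    by (simp add: Lparam_def algebra_simps)
  ultimately have "2 * dparam n k + Suc (bparam n k + 2) < Lparam n k - n * k * (3 * n * k + 1)"
    using b d \<open>2 * k \<le> n * k\<close> by linarith
  moreover have "2 * dparam n k < 2 * (n * k - 1)"
    and "2 * dparam n k + Suc (bparam n k + 2) < 3 * n * k + 1"
    using b d assms by (simp_all add: mult.assoc)
  ultimately show ?thesis
    by simp
qed

lemma choice_string_blocks:
  assumes "simple_graph_edges n E" "1 \<le> i" "i < j" "j \<le> k"
  shows "\<forall>e\<in>set E. length (block n k i j e) = Lparam n k"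
    and "\<forall>e\<in>set E. \<forall>y < n * k * (3 * n * k + 1). block n k i j e ! y = (\<not> (3 * n * k + 1) dvd Suc y)"
    and "\<forall>e\<in>set E. card (support (drop (n * k * (3 * n * k + 1)) (block n k i j e))) \<le> bparam n k + 2"
proof -
  have "n * k * (3 * n * k + 1) = (3 * n * k + 1) * n * k"
    by (simp add: algebra_simps)
  then show "\<forall>e\<in>set E. length (block n k i j e) = Lparam n k"
    and "\<forall>e\<in>set E. \<forall>y < n * k * (3 * n * k + 1). block n k i j e ! y = (\<not> (3 * n * k + 1) dvd Suc y)"
    and "\<forall>e\<in>set E. card (support (drop (n * k * (3 * n * k + 1)) (block n k i j e))) \<le> bparam n k + 2"
    using assms block_props[of i j k] by (auto simp: simple_graph_edges_def)
qed

lemma misaligned_choice_substring_far: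
  assumes E: "simple_graph_edges n E" and "3 \<le> k" "2 \<le> n"
    and ij: "1 \<le> i" "i < j" "j \<le> k"
    and p: "p + Lparam n k \<le> length (choice_string n E k i j)" "\<not> Lparam n k dvd p"
  shows "2 * dparam n k < hamming (take (Lparam n k) (drop p (choice_string n E k i j))) (template n k)"
proof -
  let ?c = "choice_string n E k i j" and ?L = "Lparam n k" and ?P = "3 * n * k + 1" and ?K = "n * k"
  have F: "?K * ?P = (3 * n * k + 1) * n * k"
    by (simp add: algebra_simps)
  have "0 < ?K"
    using assms by simp
  moreover have "?K * ?P \<le> ?L"
    unfolding F Lparam_def by linarith
  moreover have template: "\<forall>y < ?K * ?P. template n k ! y = (\<not> ?P dvd Suc y)"
    using template_props(2)[of _ n k] unfolding F by blast
  ultimately have "min (2 * (?K - 1)) (min ?P (?L - ?K * ?P) - Suc (bparam n k + 2))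
      \<le> card {x. x < ?K * ?P \<and> ?c ! (p + x) \<noteq> (\<not> ?P dvd Suc x)}"
    using misaligned_substring_mismatches[OF choice_string_blocks[OF E ij]] p
    unfolding choice_string_def by blast
  also have "\<dots> \<le> hamming (take ?L (drop p ?c)) (template n k)"
    unfolding hamming_conv_card using p(1) template_props(1)[of n k] \<open>?K * ?P \<le> ?L\<close> template
    by (intro card_mono) auto
  finally show ?thesis
    using misaligned_mismatches_exceed_twice_dparam[OF \<open>3 \<le> k\<close> \<open>2 \<le> n\<close>] by linarith
qed

lemma close_block_if_close_choice_string:
  assumes E: "simple_graph_edges n E" and "3 \<le> k" "2 \<le> n"
    and len: "length s = Lparam n k"
    and template: "hamming (template n k) s \<le> dparam n k"
    and ij: "1 \<le> i" "i < j" "j \<le> k"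
    and close: "close_substring (choice_string n E k i j) s (dparam n k)"
  shows "\<exists>e\<in>set E. hamming (block n k i j e) s \<le> dparam n k"
proof -
  let ?c = "choice_string n E k i j" and ?L = "Lparam n k"
  note blocks = choice_string_blocks[OF E ij]
  obtain p where p: "p + ?L \<le> length ?c" "hamming (take ?L (drop p ?c)) s \<le> dparam n k"
    using close len by (auto simp: close_substring_def)
  have "?L dvd p"
  proof (rule ccontr)
    assume "\<not> ?L dvd p"
    moreover have "hamming (take ?L (drop p ?c)) (template n k) \<le> 2 * dparam n k"
      using hamming_triangle[of "take ?L (drop p ?c)" s "template n k"] p len template
      by (simp add: template_props hamming_commute)
    ultimately show False
      using misaligned_choice_substring_far[OF E \<open>3 \<le> k\<close> \<open>2 \<le> n\<close> ij p(1)] by linarith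
  qed
  then obtain a where a: "p = a * ?L"
    by (metis dvdE mult.commute)
  have "0 < ?L"
    using assms by (simp add: Lparam_def)
  moreover have "Suc a * ?L \<le> length E * ?L"
    using p(1) length_concat_uniform[OF blocks(1)] a by (simp add: choice_string_def)
  ultimately have "a < length E"
    by (metis Suc_le_eq mult_le_cancel2)
  then show ?thesis
    using p(2) take_drop_concat_uniform[OF blocks(1)] a by (auto simp: choice_string_def)
qed

definition encoding_part :: "nat \<Rightarrow> nat \<Rightarrow> bool list \<Rightarrow> bool list" where
  "encoding_part n k s = take (n * k) (drop ((3 * n * k + 1) * n * k) s)"

definition back_part :: "nat \<Rightarrow> nat \<Rightarrow> bool list \<Rightarrow> bool list" where
  "back_part n k s = drop (n * k) (drop ((3 * n * k + 1) * n * k) s)"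

lemma hamming_split_parts:
  assumes "length f = (3 * n * k + 1) * n * k" "length u = n * k"
  shows "hamming (f @ u @ v) s = hamming f (take ((3 * n * k + 1) * n * k) s)
    + hamming u (encoding_part n k s) + hamming v (back_part n k s)"
  using assms by (simp add: hamming_append1 encoding_part_def back_part_def)

lemma solution_pair_constraints:
  assumes E: "simple_graph_edges n E" and "3 \<le> k" and n: "2 \<le> n"
    and len: "length s = Lparam n k"
    and template: "hamming (template n k) s \<le> dparam n k"
    and ij: "1 \<le> i" "i < j" "j \<le> k"
    and "close_substring (choice_string n E k i j) s (dparam n k)"
  shows "\<exists>(r, t)\<in>set E. {(i - 1) * n + (r - 1), (j - 1) * n + (t - 1)} \<subseteq> support (encoding_part n k s)
    \<and> support (back_part n k s) \<subseteq> {(pair_pos k i j - 1) * bparam n k..<pair_pos k i j * bparam n k}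
    \<and> card (support (encoding_part n k s)) \<le> k + card (support (back_part n k s))"
proof -
  obtain r t where e: "(r, t) \<in> set E" and block: "hamming (block n k i j (r, t)) s \<le> dparam n k"
    using close_block_if_close_choice_string[OF assms] by auto
  have rt: "1 \<le> r" "r \<le> n" "1 \<le> t" "t \<le> n"
    using E e by (auto simp: simple_graph_edges_def)
  note enc = encode_props[OF ij rt] and bt = back_tag_props[OF pair_pos_bounds[OF ij], of n]
  have "2 * k \<le> n * k"
    using n by (intro mult_le_mono1)
  then have "card (support (back_tag n k (pair_pos k i j))) + 2 * k = n * k + 2" "k \<le> n * k"
    unfolding bt(3) bparam_def by linarith+
  moreover have "length (encoding_part n k s) = n * k"
    and "length (back_part n k s) = length (back_tag n k (pair_pos k i j))"
    using len bt(1) by (simp_all add: encoding_part_def back_part_def Lparam_def)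
  moreover have "hamming (replicate (n * k) True) (encoding_part n k s)
      + hamming (replicate (length (back_tag n k (pair_pos k i j))) False) (back_part n k s) \<le> n * k - k"
    using template hamming_split_parts[of "front_tag n k" n k "ones (n * k)"] bt(1)
    by (simp add: template_def length_front_tag ones_def zeros_def dparam_def)
  moreover have "hamming (encode n k i j (r, t)) (encoding_part n k s)
      + hamming (back_tag n k (pair_pos k i j)) (back_part n k s) \<le> n * k - k"
    using block hamming_split_parts[of "front_tag n k" n k "encode n k i j (r, t)"] enc(1)
    by (simp add: block_def length_front_tag dparam_def)
  ultimately have "support (encode n k i j (r, t)) \<subseteq> support (encoding_part n k s)"
    and "support (back_part n k s) \<subseteq> support (back_tag n k (pair_pos k i j))"
    and "card (support (encoding_part n k s)) \<le> k + card (support (back_part n k s))"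
    using close_to_template_and_block[of "encoding_part n k s" "n * k" "encode n k i j (r, t)"] enc(1,3)
    by blast+
  then show ?thesis
    using e enc(2) bt(2) by blast
qed

lemma disjoint_segments:
  fixes a b n :: nat
  assumes "a \<noteq> b"
  shows "{a * n..<a * n + n} \<inter> {b * n..<b * n + n} = {}"
proof -
  have "x * n + n \<le> y * n" if "x < y" for x y :: nat
    using that mult_le_mono1[of "Suc x" y n] by simp
  then show ?thesis
    using assms by (cases "a < b") (auto simp: not_less_iff_gr_or_eq)
qed

lemma enc_section_conv_encoding_part:
  assumes "1 \<le> q" "q \<le> k"
  shows "enc_section n k s q = take n (drop ((q - 1) * n) (encoding_part n k s))"
proof -
  have "(q - 1) * n + n \<le> n * k"
    using assms mult_le_mono1[of q k n] by (cases q) (simp_all add: mult.commute)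
  then show ?thesis
    by (simp add: enc_section_def encoding_part_def drop_take take_take add.commute)
qed

lemma encoding_support_meets_sections:
  assumes E: "simple_graph_edges n E" and k: "3 \<le> k" and n: "2 \<le> n"
    and len: "length s = Lparam n k"
    and template: "hamming (template n k) s \<le> dparam n k"
    and choices: "\<forall>i j. 1 \<le> i \<and> i < j \<and> j \<le> k \<longrightarrow>
           close_substring (choice_string n E k i j) s (dparam n k)"
  shows "card (support (encoding_part n k s)) \<le> k"
    and "\<forall>q\<in>{1..k}. support (encoding_part n k s) \<inter> {(q - 1) * n..<(q - 1) * n + n} \<noteq> {}"
proof -
  let ?X = "support (encoding_part n k s)" and ?Y = "support (back_part n k s)"
  have pair: "\<exists>(r, t)\<in>set E. {(i - 1) * n + (r - 1), (j - 1) * n + (t - 1)} \<subseteq> ?X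
      \<and> ?Y \<subseteq> {(pair_pos k i j - 1) * bparam n k..<pair_pos k i j * bparam n k}
      \<and> card ?X \<le> k + card ?Y" if "1 \<le> i" "i < j" "j \<le> k" for i j
    using solution_pair_constraints[OF E k n len template that] choices that by blast
  have "?Y \<subseteq> {0..<bparam n k}" "?Y \<subseteq> {bparam n k..<2 * bparam n k}"
    using pair[of 1 2] pair[of 1 3] k unfolding pair_pos_1_2[OF k] pair_pos_1_3[OF k] by auto
  then have "?Y = {}"
    by fastforce
  then show "card ?X \<le> k"
    using pair[of 1 2] k by auto
  have in_section: "(q - 1) * n + (r - 1) \<in> {(q - 1) * n..<(q - 1) * n + n}"
    "(q - 1) * n + (t - 1) \<in> {(q - 1) * n..<(q - 1) * n + n}" if "(r, t) \<in> set E" for q r t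
    using E that by (auto simp: simple_graph_edges_def)
  show "\<forall>q\<in>{1..k}. ?X \<inter> {(q - 1) * n..<(q - 1) * n + n} \<noteq> {}"
  proof
    fix q assume q: "q \<in> {1..k}"
    then consider "1 \<le> q" "q < k" | "q = k"
      by fastforce
    then show "?X \<inter> {(q - 1) * n..<(q - 1) * n + n} \<noteq> {}"
    proof cases
      case 1
      then show ?thesis
        using pair[of q k] in_section by fastforce
    next
      case 2
      then show ?thesis
        using pair[of 1 k] k in_section by fastforce
    qed
  qed
qed

theorem lemma5:
  fixes n k :: nat and E :: "(nat \<times> nat) list" and s :: "bool list"
  assumes "simple_graph_edges n E"
    and "k \<ge> 3"
    and "length s = Lparam n k"
    and "close_substring (template n k) s (dparam n k)"
    and "\<forall>i j. 1 \<le> i \<and> i < j \<and> j \<le> k \<longrightarrow>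
           close_substring (choice_string n E k i j) s (dparam n k)"
  shows "\<forall>q \<in> {1..k}. length (filter (\<lambda>x. x) (enc_section n k s q)) = 1"
proof -
  have "s \<noteq> []"
    using assms(2,3) Lparam_pos[of k n] by auto
  moreover have "close_substring (choice_string n E k 1 2) s (dparam n k)"
    using assms(2,5) by simp
  ultimately have "2 \<le> n"
    using two_le_of_close_choice_string[OF assms(1)] by blast
  moreover have "hamming (template n k) s \<le> dparam n k"
    using hamming_le_if_close_substring_same_length assms(3,4) template_props(1) by simp
  moreover have "\<forall>p\<in>{1..k}. \<forall>q\<in>{1..k}. p \<noteq> q \<longrightarrow>
      {(p - 1) * n..<(p - 1) * n + n} \<inter> {(q - 1) * n..<(q - 1) * n + n} = {}"
    by (intro ballI impI disjoint_segments) auto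
  ultimately have "\<forall>q\<in>{1..k}. card (support (encoding_part n k s) \<inter> {(q - 1) * n..<(q - 1) * n + n}) = 1"
    using encoding_support_meets_sections[OF assms(1,2) _ assms(3) _ assms(5)]
    by (intro card_Int_eq_1_if_meets_disjoint) auto
  then show ?thesis
    by (simp add: enc_section_conv_encoding_part card_support card_support_take_drop[symmetric])
qed

end
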